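(* Fix $0\le t<1$. (i) If $A^*>0$, then $$\lim_{x\downarrow A^*\sqrt{1-t}}\frac{\partial}{\partial x}W^*(t,x)=\lim_{x\uparrow A^*\sqrt{1-t}}\frac{\partial}{\partial x}h(t,x),\qquad \lim_{x\uparrow -A^*\sqrt{1-t}}\frac{\partial}{\partial x}W^*(t,x)=\lim_{x\downarrow -A^*\sqrt{1-t}}\frac{\partial}{\partial x}h(t,x).$$ (ii) If $A^*=0$, then $$\lim_{x\downarrow0}\frac{\partial}{\partial x}W^*(t,x)<\lim_{x\uparrow0}\frac{\partial}{\partial x}W^*(t,x).$$ Here $$W^*(t,x)=\begin{cases}(1-t)^{q/2}G_q(|x|/\sqrt{1-t})\,w(A^* ), & |x|>A^*\sqrt{1-t},\\ h(t,x), & |x|\le A^*\sqrt{1-t}.\end{cases}$$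
   Context: $q>0$. $F_q(y):=\int_0^\infty u^{q-1}e^{yu-u^2/2}\,\mathrm{d}u$ and $G_q(y):=F_q(-y)$. $D^*>0$ is the unique positive root of $q-D(F_q+G_q)'(D)/(F_q+G_q)(D)=0$. $\overline{U}(t,x)=(1-t)^{q/2}(D^* )^q(F_q+G_q)(x/\sqrt{1-t})/(F_q+G_q)(D^* )$ if $|x|<D^*\sqrt{1-t}$, and $|x|^q$ otherwise. $h(t,x)=\overline{U}(t,x)-|x|^q$ if $|x|<D^*\sqrt{1-t}$, and $0$ otherwise. $w(A):=\frac{1}{G_q(A)}[(D^* )^q(F_q+G_q)(A)/(F_q+G_q)(D^* )-A^q]$ for $0\le A\le D^*$. $A^*$ is the unique maximizer of $w$ over $[0,D^*]$. *)

theory Defs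
  imports "HOL-Analysis.Analysis"
begin

definition Fq :: "real \<Rightarrow> real \<Rightarrow> real" where
  "Fq q y = (LBINT u:{0<..}. u powr (q - 1) * exp (y * u - u\<^sup>2 / 2))"

definition Gq :: "real \<Rightarrow> real \<Rightarrow> real" where
  "Gq q y = Fq q (- y)"

definition Dstar :: "real \<Rightarrow> real" where
  "Dstar q = (THE D. D > 0 \<and>
      q - D * deriv (\<lambda>y. Fq q y + Gq q y) D / (Fq q D + Gq q D) = 0)"

definition Ubar :: "real \<Rightarrow> real \<Rightarrow> real \<Rightarrow> real" where
  "Ubar q t x = (if \<bar>x\<bar> < Dstar q * sqrt (1 - t)
     then (1 - t) powr (q / 2) * (Dstar q) powr q
          * (Fq q (x / sqrt (1 - t)) + Gq q (x / sqrt (1 - t)))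
          / (Fq q (Dstar q) + Gq q (Dstar q))
     else \<bar>x\<bar> powr q)"

definition hfun :: "real \<Rightarrow> real \<Rightarrow> real \<Rightarrow> real" where
  "hfun q t x = (if \<bar>x\<bar> < Dstar q * sqrt (1 - t) then Ubar q t x - \<bar>x\<bar> powr q else 0)"

definition wfun :: "real \<Rightarrow> real \<Rightarrow> real" where
  "wfun q A = (1 / Gq q A) * ((Dstar q) powr q * (Fq q A + Gq q A)
                 / (Fq q (Dstar q) + Gq q (Dstar q)) - A powr q)"

definition Astar :: "real \<Rightarrow> real" where
  "Astar q = (THE A. A \<in> {0..Dstar q} \<and> (\<forall>B\<in>{0..Dstar q}. wfun q B \<le> wfun q A))"

definition Wstar :: "real \<Rightarrow> real \<Rightarrow> real \<Rightarrow> real" where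
  "Wstar q t x = (if \<bar>x\<bar> > Astar q * sqrt (1 - t)
     then (1 - t) powr (q / 2) * Gq q (\<bar>x\<bar> / sqrt (1 - t)) * wfun q (Astar q)
     else hfun q t x)"

end

theory Submission
  imports Defs "HOL-Real_Asymp.Real_Asymp"
begin

text \<open>
  Differentiating under the integral sign gives \<open>F\<^sub>q' = F\<^sub>q\<^sub>+\<^sub>1\<close>, and integrating
  \<open>d/du (u\<^sup>q exp (y u - u\<^sup>2/2))\<close> over \<open>]0, \<infinity>[\<close> gives the recurrence
  \<open>F\<^sub>q\<^sub>+\<^sub>2 y = y F\<^sub>q\<^sub>+\<^sub>1 y + q F\<^sub>q y\<close>. Cauchy--Schwarz makes \<open>H = F\<^sub>q + G\<^sub>q\<close> log-convex,
  so \<open>D H'(D) / H(D)\<close> increases strictly and \<open>D\<^sup>*\<close> is well defined.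

  Write \<open>w = \<phi> / G\<^sub>q\<close> with \<open>\<phi> A = C H(A) - A\<^sup>q\<close>, \<open>C = (D\<^sup>*)\<^sup>q / H(D\<^sup>*)\<close>. The numerator of \<open>w'\<close>,
  weighted by \<open>exp (- A\<^sup>2/2)\<close>, has derivative of the sign of \<open>2 A\<^sup>2 - q + 1\<close> and vanishes at \<open>D\<^sup>*\<close>;
  hence \<open>w\<close> increases strictly up to each of its critical points in \<open>]0, D\<^sup>*[\<close>, which forces a
  unique maximiser \<open>A\<^sup>* < D\<^sup>*\<close>, with \<open>w'(A\<^sup>*) = 0\<close> when \<open>A\<^sup>* > 0\<close>.

  With \<open>s = \<surd>(1 - t)\<close>, for \<open>x > 0\<close> near \<open>A\<^sup>* s\<close> we have \<open>h(t,x) = s\<^sup>q \<phi>(x/s)\<close> and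
  \<open>W\<^sup>*(t,x) = s\<^sup>q w(A\<^sup>*) G\<^sub>q(x/s)\<close>, so the one-sided derivatives at \<open>A\<^sup>* s\<close> are \<open>s\<^sup>q\<^sup>-\<^sup>1 \<phi>'(A\<^sup>*)\<close> and
  \<open>s\<^sup>q\<^sup>-\<^sup>1 w(A\<^sup>*) G\<^sub>q'(A\<^sup>*)\<close>; they agree because \<open>\<phi> = w G\<^sub>q\<close> and \<open>w'(A\<^sup>*) = 0\<close>. If \<open>A\<^sup>* = 0\<close>, the
  right derivative at \<open>0\<close> is \<open>s\<^sup>q\<^sup>-\<^sup>1 w(0) G\<^sub>q'(0) < 0\<close>. Both functions are even, which gives the
  limits at \<open>- A\<^sup>* s\<close> and from the left at \<open>0\<close>.
\<close>

lemma Gamma_integrand_integrable: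
  assumes "s > (0::real)"
  shows "integrable lborel (\<lambda>t. indicator {0..} t * t powr (s - 1) / exp t)"
proof (rule integrableI_nonneg)
  show "(\<lambda>t. indicator {0..} t * t powr (s - 1) / exp t) \<in> borel_measurable lborel"
    by measurable
  show "AE x in lborel. 0 \<le> indicator {0..} x * x powr (s - 1) / exp x"
    by (auto simp: indicator_def)
  show "(\<integral>\<^sup>+ x. ennreal (indicator {0..} x * x powr (s - 1) / exp x) \<partial>lborel) < \<infinity>"
    using Gamma_conv_nn_integral_real[OF assms, symmetric] by simp
qed

lemma integral_dominated_convergence_at:
  fixes s :: "real \<Rightarrow> 'a \<Rightarrow> 'b::{banach, second_countable_topology}" and w :: "'a \<Rightarrow> real"
  assumes "\<And>h. s h \<in> borel_measurable M" and "f \<in> borel_measurable M" and "integrable M w"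
    and lim: "AE u in M. ((\<lambda>h. s h u) \<longlongrightarrow> f u) (at x)"
    and bound: "\<forall>\<^sub>F h in at x. AE u in M. norm (s h u) \<le> w u"
  shows "((\<lambda>h. integral\<^sup>L M (s h)) \<longlongrightarrow> integral\<^sup>L M f) (at x)"
  unfolding tendsto_at_iff_sequentially
proof (intro allI impI)
  fix X :: "nat \<Rightarrow> real"
  assume "\<forall>i. X i \<in> UNIV - {x}" and "X \<longlonglongrightarrow> x"
  then have X: "filterlim X (at x) sequentially"
    by (auto simp: filterlim_at)
  obtain N where N: "\<And>n. N \<le> n \<Longrightarrow> AE u in M. norm (s (X n) u) \<le> w u"
    using filterlim_iff[THEN iffD1, OF X, rule_format, OF bound] by (auto simp: eventually_sequentially)
  show "((\<lambda>h. integral\<^sup>L M (s h)) \<circ> X) \<longlonglongrightarrow> integral\<^sup>L M f"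
    unfolding comp_def
  proof (rule LIMSEQ_offset, rule integral_dominated_convergence)
    show "AE u in M. norm (s (X (n + N)) u) \<le> w u" for n
      by (rule N) auto
    show "AE u in M. (\<lambda>n. s (X (n + N)) u) \<longlonglongrightarrow> f u"
      using lim
    proof eventually_elim
      fix u assume "((\<lambda>h. s h u) \<longlongrightarrow> f u) (at x)"
      then show "(\<lambda>n. s (X (n + N)) u) \<longlonglongrightarrow> f u"
        by (intro LIMSEQ_ignore_initial_segment filterlim_compose[OF _ X])
    qed
  qed (use assms in auto)
qed

lemma abs_exp_minus_one_le: "\<bar>exp x - 1\<bar> \<le> \<bar>x\<bar> * exp \<bar>x\<bar>" for x :: real
proof (cases "x \<ge> 0")
  case True
  have "1 \<ge> (1 - x) * exp x"
    using mult_right_mono[OF exp_ge_add_one_self[of "- x"], of "exp x"] by (simp add: exp_minus)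
  then show ?thesis using True by (simp add: algebra_simps)
next
  case False
  then have "\<bar>exp x - 1\<bar> = 1 - exp x"
    by simp
  also have "\<dots> \<le> \<bar>x\<bar>"
    using exp_ge_add_one_self[of x] False by linarith
  also have "\<dots> \<le> \<bar>x\<bar> * exp \<bar>x\<bar>"
    by (simp add: mult_le_cancel_left1)
  finally show ?thesis .
qed

lemma deriv_even_uminus:
  fixes f :: "real \<Rightarrow> real"
  assumes "\<And>x. f (- x) = f x" and "(f has_real_derivative D) (at x)"
  shows "deriv f (- x) = - D"
proof (rule DERIV_imp_deriv)
  show "(f has_real_derivative - D) (at (- x))"
    using assms(2) by (simp add: DERIV_mirror assms(1))
qed

lemma tendsto_deriv_at_right:
  fixes f g :: "real \<Rightarrow> real"
  assumes "a < b" and "\<And>x. a < x \<Longrightarrow> x < b \<Longrightarrow> (f has_real_derivative g x) (at x)" and "isCont g a"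
  shows "(deriv f \<longlongrightarrow> g a) (at_right a)"
proof (rule Lim_transform_eventually)
  show "(g \<longlongrightarrow> g a) (at_right a)"
    using assms(3) by (simp add: isCont_def filterlim_at_split)
  show "\<forall>\<^sub>F x in at_right a. g x = deriv f x"
    using assms(1,2) by (intro eventually_at_rightI[of a b]) (auto intro: DERIV_imp_deriv[symmetric])
qed

lemma tendsto_deriv_at_left:
  fixes f g :: "real \<Rightarrow> real"
  assumes "a < b" and "\<And>x. a < x \<Longrightarrow> x < b \<Longrightarrow> (f has_real_derivative g x) (at x)" and "isCont g b"
  shows "(deriv f \<longlongrightarrow> g b) (at_left b)"
proof (rule Lim_transform_eventually)
  show "(g \<longlongrightarrow> g b) (at_left b)"
    using assms(3) by (simp add: isCont_def filterlim_at_split)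
  show "\<forall>\<^sub>F x in at_left b. g x = deriv f x"
    using assms(1,2) by (intro eventually_at_leftI[of a b]) (auto intro: DERIV_imp_deriv[symmetric])
qed

lemma tendsto_deriv_at_left_uminus_of_even:
  fixes f g :: "real \<Rightarrow> real"
  assumes even: "\<And>x. f (- x) = f x"
    and "a < b" and "\<And>x. a < x \<Longrightarrow> x < b \<Longrightarrow> (f has_real_derivative g x) (at x)" and "isCont g a"
  shows "(deriv f \<longlongrightarrow> - g a) (at_left (- a))"
  unfolding filterlim_at_left_to_right minus_minus
proof (rule Lim_transform_eventually)
  show "((\<lambda>x. - g x) \<longlongrightarrow> - g a) (at_right a)"
    using assms(4) by (intro tendsto_minus) (simp add: isCont_def filterlim_at_split)
  show "\<forall>\<^sub>F x in at_right a. - g x = deriv f (- x)"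
    using assms(2,3) by (intro eventually_at_rightI[of a b]) (auto intro!: deriv_even_uminus[of f, OF even, symmetric])
qed

lemma tendsto_deriv_at_right_uminus_of_even:
  fixes f g :: "real \<Rightarrow> real"
  assumes even: "\<And>x. f (- x) = f x"
    and "a < b" and "\<And>x. a < x \<Longrightarrow> x < b \<Longrightarrow> (f has_real_derivative g x) (at x)" and "isCont g b"
  shows "(deriv f \<longlongrightarrow> - g b) (at_right (- b))"
  unfolding filterlim_at_left_to_right[of "\<lambda>x. deriv f (- x)", simplified, symmetric]
proof (rule Lim_transform_eventually)
  show "((\<lambda>x. - g x) \<longlongrightarrow> - g b) (at_left b)"
    using assms(4) by (intro tendsto_minus) (simp add: isCont_def filterlim_at_split)
  show "\<forall>\<^sub>F x in at_left b. - g x = deriv f (- x)"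
    using assms(2,3) by (intro eventually_at_leftI[of a b]) (auto intro!: deriv_even_uminus[of f, OF even, symmetric])
qed

lemma has_real_derivative_powr_rescaled:
  assumes "s > 0" and "(f has_real_derivative f') (at (x / s))"
  shows "((\<lambda>x. s powr q * f (x / s)) has_real_derivative s powr (q - 1) * f') (at x)"
proof -
  have "((\<lambda>x. f (x / s)) has_real_derivative f' * (1 / s)) (at x)"
    using DERIV_chain2[OF assms(2) DERIV_cdivide[OF DERIV_ident, of s x]] by simp
  then have "((\<lambda>x. s powr q * f (x / s)) has_real_derivative s powr q * (f' * (1 / s))) (at x)"
    by (rule DERIV_cmult)
  moreover have "s powr q * (f' * (1 / s)) = s powr (q - 1) * f'"
    using assms(1) by (simp add: powr_diff)
  ultimately show ?thesis
    by simp
qed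

section \<open>The integrals \<open>F\<^sub>q\<close>\<close>

definition Fq_integrand :: "real \<Rightarrow> real \<Rightarrow> real \<Rightarrow> real" where
  "Fq_integrand q y u = u powr (q - 1) * exp (y * u - u\<^sup>2 / 2)"

lemma Fq_eq_integral: "Fq q y = integral\<^sup>L lborel (\<lambda>u. indicator {0<..} u * Fq_integrand q y u)"
  unfolding Fq_def set_lebesgue_integral_def Fq_integrand_def by simp

lemma Fq_integrand_integrable:
  assumes "q > 0"
  shows "integrable lborel (\<lambda>u. indicator {0<..} u * Fq_integrand q y u)"
proof (rule Bochner_Integration.integrable_bound)
  show "integrable lborel (\<lambda>u. exp ((y + 1)\<^sup>2 / 2) * (indicator {0..} u * u powr (q - 1) / exp u))"
    using Gamma_integrand_integrable[OF assms] by (rule integrable_mult_right)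
  show "(\<lambda>u. indicator {0<..} u * Fq_integrand q y u) \<in> borel_measurable lborel"
    unfolding Fq_integrand_def by measurable
  show "AE u in lborel. norm (indicator {0<..} u * Fq_integrand q y u)
      \<le> norm (exp ((y + 1)\<^sup>2 / 2) * (indicator {0..} u * u powr (q - 1) / exp u))"
  proof (rule AE_I2)
    fix u :: real
    \<comment> \<open>completing the square: \<open>y u - u\<^sup>2/2 \<le> (y + 1)\<^sup>2/2 - u\<close>\<close>
    have "y * u - u\<^sup>2 / 2 \<le> (y + 1)\<^sup>2 / 2 + (- u)"
      using sum_squares_ge_zero[of "u - (y + 1)" 0] by (simp add: power2_eq_square algebra_simps)
    then have "exp (y * u - u\<^sup>2 / 2) \<le> exp ((y + 1)\<^sup>2 / 2) * exp (- u)"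
      by (simp add: exp_add[symmetric])
    then have "u powr (q - 1) * exp (y * u - u\<^sup>2 / 2) \<le> u powr (q - 1) * (exp ((y + 1)\<^sup>2 / 2) * exp (- u))"
      by (intro mult_left_mono) auto
    then show "norm (indicator {0<..} u * Fq_integrand q y u)
      \<le> norm (exp ((y + 1)\<^sup>2 / 2) * (indicator {0..} u * u powr (q - 1) / exp u))"
      by (cases "u > 0") (simp_all add: Fq_integrand_def indicator_def exp_minus field_simps)
  qed
qed

lemma Fq_integrand_has_derivative_in_y:
  assumes "u > 0"
  shows "((\<lambda>y. Fq_integrand q y u) has_real_derivative Fq_integrand (q + 1) y u) (at y)"
  unfolding Fq_integrand_def using assms
  by (auto intro!: derivative_eq_intros simp: powr_mult_base algebra_simps)

lemma Fq_integrand_pos: "u > 0 \<Longrightarrow> Fq_integrand q y u > 0"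
  unfolding Fq_integrand_def by simp

lemma Fq_integrand_difference_quotient_bound:
  assumes u: "u > 0" and h: "h \<noteq> 0" "\<bar>h\<bar> < 1"
  shows "\<bar>(Fq_integrand q (y + h) u - Fq_integrand q y u) / h\<bar> \<le> Fq_integrand (q + 1) (y + 1) u"
proof -
  have shift: "Fq_integrand q (y + h) u - Fq_integrand q y u = Fq_integrand q y u * (exp (h * u) - 1)"
    by (simp add: Fq_integrand_def exp_add[symmetric] algebra_simps)
  have "\<bar>exp (h * u) - 1\<bar> \<le> \<bar>h * u\<bar> * exp \<bar>h * u\<bar>"
    by (rule abs_exp_minus_one_le)
  also have "\<dots> = \<bar>h\<bar> * (u * exp (\<bar>h\<bar> * u))"
    using u by (simp add: abs_mult)
  also have "\<dots> \<le> \<bar>h\<bar> * (u * exp u)"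
    using u h mult_left_le_one_le[of u "\<bar>h\<bar>"] by (intro mult_left_mono) auto
  finally have "\<bar>exp (h * u) - 1\<bar> / \<bar>h\<bar> \<le> u * exp u"
    using h by (simp add: divide_le_eq mult.commute)
  then have "Fq_integrand q y u * (\<bar>exp (h * u) - 1\<bar> / \<bar>h\<bar>) \<le> Fq_integrand q y u * (u * exp u)"
    by (rule mult_left_mono) (use Fq_integrand_pos[OF u, of q y] in simp)
  also have "\<dots> = (u * u powr (q - 1)) * (exp u * exp (y * u - u\<^sup>2 / 2))"
    by (simp add: Fq_integrand_def ac_simps)
  also have "\<dots> = Fq_integrand (q + 1) (y + 1) u"
    using u by (simp add: Fq_integrand_def powr_mult_base exp_add[symmetric] algebra_simps)
  finally show ?thesis
    using Fq_integrand_pos[OF u, of q y] by (simp add: shift abs_mult)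
qed

lemma Fq_has_real_derivative:
  assumes q: "q > 0"
  shows "(Fq q has_real_derivative Fq (q + 1) y) (at y)"
  unfolding DERIV_def
proof -
  let ?I = "\<lambda>q y u. indicator {0<..} u * Fq_integrand q y u"
  let ?s = "\<lambda>h u. indicator {0<..} u * ((Fq_integrand q (y + h) u - Fq_integrand q y u) / h)"
  have quotient: "(Fq q (y + h) - Fq q y) / h = integral\<^sup>L lborel (?s h)" for h
    using Fq_integrand_integrable[OF q, of "y + h"] Fq_integrand_integrable[OF q, of y]
    by (simp add: Fq_eq_integral right_diff_distrib diff_divide_distrib)
  have "((\<lambda>h. integral\<^sup>L lborel (?s h)) \<longlongrightarrow> integral\<^sup>L lborel (?I (q + 1) y)) (at 0)"
  proof (rule integral_dominated_convergence_at[where w = "?I (q + 1) (y + 1)"])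
    show "?s h \<in> borel_measurable lborel" for h
      unfolding Fq_integrand_def by measurable
    show "?I (q + 1) y \<in> borel_measurable lborel"
      unfolding Fq_integrand_def by measurable
    show "integrable lborel (?I (q + 1) (y + 1))"
      using q by (intro Fq_integrand_integrable) simp
    show "AE u in lborel. ((\<lambda>h. ?s h u) \<longlongrightarrow> ?I (q + 1) y u) (at 0)"
    proof (rule AE_I2)
      fix u :: real
      show "((\<lambda>h. ?s h u) \<longlongrightarrow> ?I (q + 1) y u) (at 0)"
        using Fq_integrand_has_derivative_in_y[of u q y] by (cases "u > 0") (simp_all add: DERIV_def)
    qed
    have "\<forall>\<^sub>F h in at 0. h \<noteq> 0 \<and> \<bar>h\<bar> < (1::real)"
      unfolding eventually_at by (intro exI[of _ 1]) (auto simp: dist_real_def)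
    then show "\<forall>\<^sub>F h in at 0. AE u in lborel. norm (?s h u) \<le> ?I (q + 1) (y + 1) u"
    proof eventually_elim
      case (elim h)
      show ?case
      proof (rule AE_I2)
        fix u :: real
        show "norm (?s h u) \<le> ?I (q + 1) (y + 1) u"
          using Fq_integrand_difference_quotient_bound[of u h q y] elim by (cases "u > 0") simp_all
      qed
    qed
  qed
  then show "((\<lambda>h. (Fq q (y + h) - Fq q y) / h) \<longlongrightarrow> Fq (q + 1) y) (at 0)"
    unfolding quotient by (simp add: Fq_eq_integral)
qed

lemma Fq_pos:
  assumes "q > 0"
  shows "Fq q y > 0"
proof -
  let ?f = "\<lambda>u. indicator {0<..} u * Fq_integrand q y u"
  have nonneg: "AE u in lborel. 0 \<le> ?f u"
    by (rule AE_I2) (auto simp: Fq_integrand_def indicator_def)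
  have "Fq q y \<noteq> 0"
  proof
    assume "Fq q y = 0"
    then have "AE u in lborel. ?f u = 0"
      using integral_nonneg_eq_0_iff_AE[OF Fq_integrand_integrable[OF assms] nonneg]
      by (simp add: Fq_eq_integral)
    then obtain N where N: "{u \<in> space lborel. ?f u \<noteq> 0} \<subseteq> N" "emeasure lborel N = 0" "N \<in> sets lborel"
      by (rule AE_E)
    have "{0<..<1::real} \<subseteq> N"
    proof
      fix u :: real
      assume "u \<in> {0<..<1}"
      then have "u \<in> {u \<in> space lborel. ?f u \<noteq> 0}"
        using Fq_integrand_pos[of u q y] by simp
      then show "u \<in> N"
        using N(1) by blast
    qed
    then have "emeasure lborel {0<..<1::real} \<le> emeasure lborel N"
      by (intro emeasure_mono N(3))
    then show False
      using N(2) by simp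
  qed
  moreover have "Fq q y \<ge> 0"
    unfolding Fq_eq_integral by (rule integral_nonneg_AE[OF nonneg])
  ultimately show ?thesis
    by simp
qed

lemma Fq_integrand_has_derivative_in_u:
  assumes "u > 0"
  shows "(Fq_integrand (q + 1) y has_real_derivative
            q * Fq_integrand q y u + y * Fq_integrand (q + 1) y u - Fq_integrand (q + 2) y u) (at u)"
proof -
  have "u powr q = u * u powr (q - 1)"
    using assms by (simp add: powr_mult_base)
  moreover have "u powr (q + 1) = u * u powr q"
    using assms powr_mult_base[of u q] by (simp add: add.commute)
  ultimately show ?thesis
    unfolding Fq_integrand_def using assms
    by (auto intro!: derivative_eq_intros simp: algebra_simps power2_eq_square)
qed

text \<open>Integrate the \<open>u\<close>-derivative of \<open>u\<^sup>q exp (y u - u\<^sup>2 / 2)\<close> over \<open>]0, \<infinity>[\<close>; the boundary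
  terms vanish.\<close>
lemma Fq_recurrence:
  assumes q: "q > 0"
  shows "Fq (q + 2) y = y * Fq (q + 1) y + q * Fq q y"
proof -
  let ?I = "\<lambda>q u. indicator {0<..} u * Fq_integrand q y u"
  let ?f = "\<lambda>u. q * Fq_integrand q y u + y * Fq_integrand (q + 1) y u - Fq_integrand (q + 2) y u"
  have int: "integrable lborel (?I q)" "integrable lborel (?I (q + 1))" "integrable lborel (?I (q + 2))"
    using q by (auto intro: Fq_integrand_integrable)
  have "integrable lborel (\<lambda>u. q * ?I q u + y * ?I (q + 1) u - ?I (q + 2) u)"
    using int by auto
  then have "set_integrable lborel (einterval 0 \<infinity>) ?f"
    unfolding set_integrable_def zero_ereal_def by (simp add: algebra_simps)
  then have "(LBINT u=0..\<infinity>. ?f u) = 0 - 0"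
  proof (rule interval_integral_FTC_integrable[where F = "Fq_integrand (q + 1) y", rotated 3])
    show "(Fq_integrand (q + 1) y has_vector_derivative ?f u) (at u)" if "0 < ereal u" for u
      using Fq_integrand_has_derivative_in_u[of u q y] that
      by (simp add: has_real_derivative_iff_has_vector_derivative zero_ereal_def)
    show "isCont ?f u" if "0 < ereal u" for u
      using that unfolding Fq_integrand_def by (auto intro!: continuous_intros simp: zero_ereal_def)
    have "((\<lambda>u. u powr q * exp (y * u - u\<^sup>2 / 2)) \<longlongrightarrow> 0 * exp (y * 0 - 0\<^sup>2 / 2)) (at_right 0)"
      using q by (intro tendsto_mult tendsto_zero_powrI tendsto_intros)
        (auto intro: tendsto_ident_at eventually_at_rightI[of 0 1])
    then show "((Fq_integrand (q + 1) y \<circ> real_of_ereal) \<longlongrightarrow> 0) (at_right 0)"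
      unfolding zero_ereal_def ereal_tendsto_simps Fq_integrand_def by simp
    have "((\<lambda>u::real. u powr q * exp (y * u - u\<^sup>2 / 2)) \<longlongrightarrow> 0) at_top"
      by real_asymp
    then show "((Fq_integrand (q + 1) y \<circ> real_of_ereal) \<longlongrightarrow> 0) (at_left \<infinity>)"
      unfolding ereal_tendsto_simps Fq_integrand_def by simp
  qed simp
  then have "integral\<^sup>L lborel (\<lambda>u. q * ?I q u + y * ?I (q + 1) u - ?I (q + 2) u) = 0"
    by (simp add: interval_lebesgue_integral_0_infty set_lebesgue_integral_def algebra_simps)
  with int show ?thesis
    by (simp add: Fq_eq_integral)
qed

lemma Fq_quadratic_nonneg:
  assumes q: "q > 0"
  shows "Fq (q + 2) y - 2 * l * Fq (q + 1) y + l\<^sup>2 * Fq q y \<ge> 0"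
proof -
  let ?I = "\<lambda>q u. indicator {0<..} u * Fq_integrand q y u"
  have int: "integrable lborel (?I q)" "integrable lborel (?I (q + 1))" "integrable lborel (?I (q + 2))"
    using q by (auto intro: Fq_integrand_integrable)
  have "Fq (q + 2) y - 2 * l * Fq (q + 1) y + l\<^sup>2 * Fq q y
      = integral\<^sup>L lborel (\<lambda>u. ?I (q + 2) u - 2 * l * ?I (q + 1) u + l\<^sup>2 * ?I q u)"
    using int by (simp add: Fq_eq_integral)
  also have "\<dots> = integral\<^sup>L lborel (\<lambda>u. indicator {0<..} u * (Fq_integrand q y u * (u - l)\<^sup>2))"
  proof (intro Bochner_Integration.integral_cong refl)
    fix u :: real
    have "u > 0 \<Longrightarrow> u powr (q + 1) = u * u powr q \<and> u powr q = u * u powr (q - 1)"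
      using powr_mult_base[of u q] powr_mult_base[of u "q - 1"] by (simp add: add.commute)
    then show "?I (q + 2) u - 2 * l * ?I (q + 1) u + l\<^sup>2 * ?I q u
        = indicator {0<..} u * (Fq_integrand q y u * (u - l)\<^sup>2)"
      by (cases "u > 0") (simp_all add: Fq_integrand_def power2_eq_square algebra_simps)
  qed
  also have "\<dots> \<ge> 0"
    by (intro integral_nonneg_AE AE_I2) (auto simp: Fq_integrand_def)
  finally show ?thesis .
qed

section \<open>\<open>F\<^sub>q + G\<^sub>q\<close> and \<open>D\<^sup>*\<close>\<close>

definition Hq :: "real \<Rightarrow> real \<Rightarrow> real" where
  "Hq q y = Fq q y + Gq q y"

definition Hq_odd :: "real \<Rightarrow> real \<Rightarrow> real" where
  "Hq_odd q y = Fq q y - Gq q y"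

lemma Fq_has_real_derivative_chain [derivative_intros]:
  assumes "q > 0" and "(f has_real_derivative f') (at x)"
  shows "((\<lambda>x. Fq q (f x)) has_real_derivative Fq (q + 1) (f x) * f') (at x)"
  using DERIV_chain2[OF Fq_has_real_derivative[OF assms(1)] assms(2)] .

lemma Gq_has_real_derivative:
  assumes "q > 0"
  shows "(Gq q has_real_derivative - Gq (q + 1) y) (at y)"
  unfolding Gq_def[abs_def] using assms by (auto intro!: derivative_eq_intros)

lemma Hq_has_real_derivative:
  assumes "q > 0"
  shows "(Hq q has_real_derivative Hq_odd (q + 1) y) (at y)"
  unfolding Hq_def[abs_def] Hq_odd_def Gq_def using assms by (auto intro!: derivative_eq_intros)

lemma Hq_odd_has_real_derivative:
  assumes "q > 0"
  shows "(Hq_odd q has_real_derivative Hq (q + 1) y) (at y)"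
  unfolding Hq_odd_def[abs_def] Hq_def Gq_def using assms by (auto intro!: derivative_eq_intros)

lemma Gq_pos: "q > 0 \<Longrightarrow> Gq q y > 0"
  unfolding Gq_def by (rule Fq_pos)

lemma Hq_pos: "q > 0 \<Longrightarrow> Hq q y > 0"
  unfolding Hq_def using Fq_pos Gq_pos by (simp add: add_pos_pos)

lemma Hq_odd_pos:
  assumes "q > 0" and "y > 0"
  shows "Hq_odd q y > 0"
proof -
  have "Fq q (- y) < Fq q y"
  proof (rule DERIV_pos_imp_increasing[where f = "Fq q"])
    fix x
    assume "- y \<le> x" "x \<le> y"
    have "Fq (q + 1) x > 0"
      using assms(1) by (intro Fq_pos) simp
    then show "\<exists>d. (Fq q has_real_derivative d) (at x) \<and> d > 0"
      using Fq_has_real_derivative[OF assms(1)] by blast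
  qed (use assms(2) in simp)
  then show ?thesis
    by (simp add: Hq_odd_def Gq_def)
qed

lemma Gq_recurrence:
  assumes "q > 0"
  shows "Gq (q + 2) y = q * Gq q y - y * Gq (q + 1) y"
  unfolding Gq_def using Fq_recurrence[OF assms, of "- y"] by simp

lemma Hq_recurrence:
  assumes "q > 0"
  shows "Hq (q + 2) y = y * Hq_odd (q + 1) y + q * Hq q y"
  unfolding Hq_def Hq_odd_def using Fq_recurrence[OF assms, of y] Gq_recurrence[OF assms, of y]
  by (simp add: algebra_simps)

text \<open>Add the instances \<open>(y, l)\<close> and \<open>(-y, -l)\<close> of \<open>Fq_quadratic_nonneg\<close>, with \<open>l\<close> the logarithmic
  derivative of \<open>Hq q\<close>.\<close>
lemma Hq_log_convex:
  assumes "q > 0"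
  shows "(Hq_odd (q + 1) y)\<^sup>2 \<le> Hq (q + 2) y * Hq q y"
proof -
  define l where "l = Hq_odd (q + 1) y / Hq q y"
  have H: "Hq q y > 0"
    using Hq_pos[OF assms] .
  have "Hq (q + 2) y - 2 * l * Hq_odd (q + 1) y + l\<^sup>2 * Hq q y \<ge> 0"
    using Fq_quadratic_nonneg[OF assms, of y l] Fq_quadratic_nonneg[OF assms, of "- y" "- l"]
    unfolding Hq_def Hq_odd_def Gq_def by (simp add: algebra_simps)
  also have "Hq (q + 2) y - 2 * l * Hq_odd (q + 1) y + l\<^sup>2 * Hq q y
      = (Hq (q + 2) y * Hq q y - (Hq_odd (q + 1) y)\<^sup>2) / Hq q y"
    using H unfolding l_def by (simp add: field_simps power2_eq_square)
  finally show ?thesis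
    using H by (simp add: zero_le_divide_iff)
qed

lemma Hq_log_deriv_mono:
  assumes "q > 0" and "a \<le> b"
  shows "Hq_odd (q + 1) a / Hq q a \<le> Hq_odd (q + 1) b / Hq q b"
proof (rule DERIV_nonneg_imp_nondecreasing[OF assms(2)])
  fix x
  have "((\<lambda>y. Hq_odd (q + 1) y / Hq q y) has_real_derivative
      (Hq (q + 2) x * Hq q x - Hq_odd (q + 1) x * Hq_odd (q + 1) x) / (Hq q x * Hq q x)) (at x)"
    using Hq_pos[OF assms(1), of x] Hq_odd_has_real_derivative[of "q + 1" x] assms(1)
    by (intro DERIV_divide Hq_has_real_derivative) (auto simp: add.assoc)
  moreover have "0 \<le> (Hq (q + 2) x * Hq q x - Hq_odd (q + 1) x * Hq_odd (q + 1) x) / (Hq q x * Hq q x)"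
    using Hq_log_convex[OF assms(1), of x] by (simp add: power2_eq_square)
  ultimately show "\<exists>d. ((\<lambda>y. Hq_odd (q + 1) y / Hq q y) has_real_derivative d) (at x) \<and> 0 \<le> d"
    by blast
qed

context
  fixes q :: real
  assumes q: "q > 0"
begin

lemma Dstar_equation_iff:
  "q - D * deriv (\<lambda>y. Fq q y + Gq q y) D / (Fq q D + Gq q D) = 0 \<longleftrightarrow> D * Hq_odd (q + 1) D = q * Hq q D"
proof -
  have "deriv (\<lambda>y. Fq q y + Gq q y) D = Hq_odd (q + 1) D"
    using DERIV_imp_deriv[OF Hq_has_real_derivative[OF q]] by (simp add: Hq_def[abs_def])
  then show ?thesis
    using Hq_pos[OF q, of D] by (auto simp: Hq_def field_simps)
qed

lemma Dstar_equation_unique: "\<exists>!D. D > 0 \<and> D * Hq_odd (q + 1) D = q * Hq q D"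
proof -
  define f where "f y = y * (Hq_odd (q + 1) y / Hq q y)" for y
  have pos: "Hq q y > 0" "y > 0 \<Longrightarrow> Hq_odd (q + 1) y > 0" for y
    using q by (simp_all add: Hq_pos Hq_odd_pos)
  have eq_iff: "D * Hq_odd (q + 1) D = q * Hq q D \<longleftrightarrow> f D = q" for D
    using pos(1)[of D] by (auto simp: f_def field_simps)
  have f_strict_mono: "f a < f b" if "0 < a" "a < b" for a b
  proof -
    have "f a \<le> a * (Hq_odd (q + 1) b / Hq q b)"
      unfolding f_def using Hq_log_deriv_mono[OF q, of a b] that by (intro mult_left_mono) auto
    also have "\<dots> < f b"
      unfolding f_def using that pos[of b] by (intro mult_strict_right_mono) auto
    finally show ?thesis .
  qed
  define r where "r = Hq_odd (q + 1) 1 / Hq q 1"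
  define D1 where "D1 = 1 + q / r"
  have r: "r > 0"
    unfolding r_def using pos[of 1] by simp
  then have D1: "D1 \<ge> 1"
    unfolding D1_def using divide_pos_pos[OF q r] by linarith
  have "q < D1 * r"
    unfolding D1_def using r by (simp add: distrib_right)
  also have "\<dots> \<le> f D1"
    unfolding f_def r_def using Hq_log_deriv_mono[OF q D1] D1 by (intro mult_left_mono) auto
  finally have "f 0 \<le> q \<and> q \<le> f D1"
    using q by (simp add: f_def)
  moreover have "isCont f y" for y
    unfolding f_def using pos(1)[of y] Hq_odd_has_real_derivative[of "q + 1" y] q
    by (intro continuous_intros DERIV_isCont[OF Hq_has_real_derivative[OF q]]) (auto intro: DERIV_isCont)
  ultimately obtain D where D: "0 \<le> D" "D \<le> D1" "f D = q"
    using IVT[of f 0 q D1] D1 by auto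
  then have "D > 0"
    using q by (cases "D = 0") (auto simp: f_def)
  show ?thesis
    unfolding eq_iff
  proof (rule ex1I[of _ D])
    show "D > 0 \<and> f D = q"
      using \<open>D > 0\<close> D(3) by simp
    show "E = D" if "E > 0 \<and> f E = q" for E
    proof (rule ccontr)
      assume "E \<noteq> D"
      then consider "E < D" | "D < E"
        by linarith
      then show False
        using f_strict_mono[of E D] f_strict_mono[of D E] that \<open>D > 0\<close> D(3) by cases simp_all
    qed
  qed
qed

lemma Dstar: "Dstar q > 0" "Dstar q * Hq_odd (q + 1) (Dstar q) = q * Hq q (Dstar q)"
  using theI'[OF Dstar_equation_unique] unfolding Dstar_def Dstar_equation_iff by auto

end

section \<open>The function \<open>w\<close> and \<open>A\<^sup>*\<close>\<close>

definition Cstar :: "real \<Rightarrow> real" where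
  "Cstar q = Dstar q powr q / Hq q (Dstar q)"

definition wfun_numer :: "real \<Rightarrow> real \<Rightarrow> real" where
  "wfun_numer q A = Cstar q * Hq q A - A powr q"

definition wfun_numer' :: "real \<Rightarrow> real \<Rightarrow> real" where
  "wfun_numer' q A = Cstar q * Hq_odd (q + 1) A - q * A powr (q - 1)"

definition wfun_numer'' :: "real \<Rightarrow> real \<Rightarrow> real" where
  "wfun_numer'' q A = Cstar q * Hq (q + 2) A - q * (q - 1) * A powr (q - 2)"

definition wfun_deriv_numer :: "real \<Rightarrow> real \<Rightarrow> real" where
  "wfun_deriv_numer q A = wfun_numer' q A * Gq q A + wfun_numer q A * Gq (q + 1) A"

context
  fixes q :: real
  assumes q: "q > 0"
begin

lemma Cstar_pos: "Cstar q > 0"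
  unfolding Cstar_def using Dstar(1)[OF q] Hq_pos[OF q] by simp

lemma wfun_eq: "wfun q A = wfun_numer q A / Gq q A"
  unfolding wfun_def wfun_numer_def Cstar_def Hq_def by simp

lemma wfun_numer_has_real_derivative:
  "A > 0 \<Longrightarrow> (wfun_numer q has_real_derivative wfun_numer' q A) (at A)"
  unfolding wfun_numer_def[abs_def] wfun_numer'_def
  by (intro DERIV_diff DERIV_cmult Hq_has_real_derivative[OF q] has_real_derivative_powr)

lemma wfun_numer'_has_real_derivative:
  assumes "A > 0"
  shows "(wfun_numer' q has_real_derivative wfun_numer'' q A) (at A)"
proof -
  have "((\<lambda>A. Cstar q * Hq_odd (q + 1) A - q * A powr (q - 1)) has_real_derivative
      Cstar q * Hq (q + 1 + 1) A - q * ((q - 1) * A powr (q - 1 - 1))) (at A)"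
    using q by (intro DERIV_diff DERIV_cmult Hq_odd_has_real_derivative has_real_derivative_powr assms) simp
  then show ?thesis
    unfolding wfun_numer'_def[abs_def] wfun_numer''_def by (simp add: algebra_simps)
qed

lemma wfun_has_real_derivative:
  assumes "A > 0"
  shows "(wfun q has_real_derivative wfun_deriv_numer q A / (Gq q A)\<^sup>2) (at A)"
proof -
  have "((\<lambda>A. wfun_numer q A / Gq q A) has_real_derivative
      (wfun_numer' q A * Gq q A - wfun_numer q A * - Gq (q + 1) A) / (Gq q A * Gq q A)) (at A)"
    using Gq_pos[OF q, of A]
    by (intro DERIV_divide wfun_numer_has_real_derivative Gq_has_real_derivative q assms) simp
  then show ?thesis
    unfolding wfun_eq[abs_def] wfun_deriv_numer_def by (simp add: power2_eq_square)
qed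

text \<open>The constant \<open>Cstar q\<close> drops out by \<open>Hq_recurrence\<close>.\<close>
lemma wfun_numer_ode:
  assumes "A > 0"
  shows "wfun_numer'' q A - A * wfun_numer' q A - q * wfun_numer q A
    = q * A powr (q - 2) * (2 * A\<^sup>2 - q + 1)"
proof -
  have p1: "A powr (q - 1) = A * A powr (q - 2)"
    using assms powr_mult_base[of A "q - 2"] by simp
  then have "A powr q = A * A * A powr (q - 2)"
    using assms powr_mult_base[of A "q - 1"] by (simp add: mult.assoc)
  with p1 show ?thesis
    unfolding wfun_numer''_def wfun_numer'_def wfun_numer_def Hq_recurrence[OF q]
    by (simp add: algebra_simps power2_eq_square)
qed

text \<open>The factor \<open>exp (- A\<^sup>2 / 2)\<close> is an integrating factor: it turns the derivative of
  \<open>wfun_deriv_numer\<close> into a multiple of \<open>2 A\<^sup>2 - q + 1\<close>.\<close>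
lemma weighted_wfun_deriv_numer_has_real_derivative:
  assumes "A > 0"
  shows "((\<lambda>A. exp (- A\<^sup>2 / 2) * wfun_deriv_numer q A) has_real_derivative
      exp (- A\<^sup>2 / 2) * Gq q A * (q * A powr (q - 2) * (2 * A\<^sup>2 - q + 1))) (at A)"
proof -
  have G1: "(Gq (q + 1) has_real_derivative - Gq (q + 2) A) (at A)"
    using Gq_has_real_derivative[of "q + 1" A] q by (simp add: add.assoc)
  have derivative: "((\<lambda>A. exp (- A\<^sup>2 / 2) * wfun_deriv_numer q A) has_real_derivative
      exp (- A\<^sup>2 / 2) * (- A) * wfun_deriv_numer q A
      + exp (- A\<^sup>2 / 2) * (wfun_numer'' q A * Gq q A + wfun_numer' q A * - Gq (q + 1) A
                           + (wfun_numer' q A * Gq (q + 1) A + wfun_numer q A * - Gq (q + 2) A))) (at A)"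
    unfolding wfun_deriv_numer_def[abs_def]
    by (rule derivative_eq_intros wfun_numer'_has_real_derivative wfun_numer_has_real_derivative
        Gq_has_real_derivative G1 q assms refl | simp)+
  moreover have "exp (- A\<^sup>2 / 2) * (- A) * wfun_deriv_numer q A
      + exp (- A\<^sup>2 / 2) * (wfun_numer'' q A * Gq q A + wfun_numer' q A * - Gq (q + 1) A
                           + (wfun_numer' q A * Gq (q + 1) A + wfun_numer q A * - Gq (q + 2) A))
    = exp (- A\<^sup>2 / 2) * Gq q A * (wfun_numer'' q A - A * wfun_numer' q A - q * wfun_numer q A)"
    unfolding wfun_deriv_numer_def Gq_recurrence[OF q] by (simp add: algebra_simps)
  ultimately show ?thesis
    unfolding wfun_numer_ode[OF assms] by simp
qed

lemma wfun_numer_Dstar: "wfun_numer q (Dstar q) = 0"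
  unfolding wfun_numer_def Cstar_def using Hq_pos[OF q, of "Dstar q"] by simp

lemma wfun_numer'_Dstar: "wfun_numer' q (Dstar q) = 0"
proof -
  have D: "Dstar q > 0"
    using Dstar(1)[OF q] .
  have "Dstar q powr q = Dstar q * Dstar q powr (q - 1)"
    using D powr_mult_base[of "Dstar q" "q - 1"] by simp
  then have "Cstar q * Hq_odd (q + 1) (Dstar q)
      = Dstar q powr (q - 1) * (Dstar q * Hq_odd (q + 1) (Dstar q)) / Hq q (Dstar q)"
    unfolding Cstar_def by simp
  also have "\<dots> = q * Dstar q powr (q - 1)"
    unfolding Dstar(2)[OF q] using Hq_pos[OF q, of "Dstar q"] by simp
  finally show ?thesis
    unfolding wfun_numer'_def by simp
qed

lemma wfun_deriv_numer_Dstar: "wfun_deriv_numer q (Dstar q) = 0"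
  unfolding wfun_deriv_numer_def wfun_numer_Dstar wfun_numer'_Dstar by simp

lemma wfun_continuous_on: "continuous_on {0..} (wfun q)"
proof -
  have "continuous_on {0..} (\<lambda>A::real. A powr q)"
    using q by (intro continuous_on_powr' continuous_on_id continuous_on_const) auto
  moreover have "continuous_on {0..} (Hq q)"
    by (intro continuous_at_imp_continuous_on ballI DERIV_isCont[OF Hq_has_real_derivative[OF q]])
  moreover have "continuous_on {0..} (Gq q)"
    by (intro continuous_at_imp_continuous_on ballI DERIV_isCont[OF Gq_has_real_derivative[OF q]])
  ultimately have "continuous_on {0..} (\<lambda>A. (Cstar q * Hq q A - A powr q) / Gq q A)"
    using Gq_pos[OF q]
    by (intro continuous_on_divide continuous_on_diff continuous_on_mult continuous_on_const)
      (auto simp: less_imp_neq[symmetric])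
  then show ?thesis
    unfolding wfun_eq[abs_def] wfun_numer_def .
qed

lemma wfun_0_pos: "wfun q 0 > 0"
  unfolding wfun_eq wfun_numer_def using Cstar_pos Hq_pos[OF q] Gq_pos[OF q] by simp

lemma wfun_Dstar: "wfun q (Dstar q) = 0"
  unfolding wfun_eq wfun_numer_Dstar by simp

lemma wfun_deriv_numer_pos_below_root:
  assumes z: "0 < z" "z < Dstar q" "wfun_deriv_numer q z = 0" and x: "0 < x" "x < z"
  shows "wfun_deriv_numer q x > 0"
proof -
  define g where "g A = exp (- A\<^sup>2 / 2) * wfun_deriv_numer q A" for A
  define c where "c A = exp (- A\<^sup>2 / 2) * Gq q A * (q * A powr (q - 2))" for A
  have c_pos: "c A > 0" if "A > 0" for A
    unfolding c_def using that q Gq_pos[OF q, of A] by simp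
  have g_deriv: "(g has_real_derivative c A * (2 * A\<^sup>2 - q + 1)) (at A)" if "A > 0" for A
    using weighted_wfun_deriv_numer_has_real_derivative[OF that]
    unfolding g_def[abs_def] c_def by (simp add: mult.assoc)
  have g_cont: "continuous_on {a..b} g" if "a > 0" for a b
    using that by (intro continuous_at_imp_continuous_on ballI DERIV_isCont[OF g_deriv]) auto
  show ?thesis
  proof (cases "2 * z\<^sup>2 - q + 1 \<ge> 0")
    case True
    \<comment> \<open>then \<open>g\<close> increases strictly on \<open>[z, Dstar q]\<close>, contradicting \<open>g z = 0 = g (Dstar q)\<close>\<close>
    have "g z < g (Dstar q)"
    proof (rule DERIV_pos_imp_increasing_open[OF z(2) _ g_cont[OF z(1)]])
      fix A
      assume "z < A" "A < Dstar q"
      then have A: "A > 0" "2 * A\<^sup>2 - q + 1 > 0"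
        using True z(1) power_strict_mono[of z A 2] by auto
      show "\<exists>d. (g has_real_derivative d) (at A) \<and> d > 0"
        using g_deriv[OF A(1)] mult_pos_pos[OF c_pos[OF A(1)] A(2)] by blast
    qed
    then show ?thesis
      using z(3) wfun_deriv_numer_Dstar by (simp add: g_def)
  next
    case False
    have "g z < g x"
    proof (rule DERIV_neg_imp_decreasing_open[OF x(2) _ g_cont[OF x(1)]])
      fix A
      assume "x < A" "A < z"
      then have A: "A > 0" "2 * A\<^sup>2 - q + 1 < 0"
        using False x(1) power_strict_mono[of A z 2] by auto
      show "\<exists>d. (g has_real_derivative d) (at A) \<and> d < 0"
        using g_deriv[OF A(1)] mult_pos_neg[OF c_pos[OF A(1)] A(2)] by blast
    qed
    then show ?thesis
      using z(3) by (simp add: g_def zero_less_mult_iff)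
  qed
qed

lemma wfun_less_at_root:
  assumes "0 \<le> a" "a < z" "z < Dstar q" "wfun_deriv_numer q z = 0"
  shows "wfun q a < wfun q z"
proof (rule DERIV_pos_imp_increasing_open[OF assms(2)])
  fix x
  assume "a < x" "x < z"
  then have "x > 0" "wfun_deriv_numer q x > 0"
    using assms wfun_deriv_numer_pos_below_root[of z x] by auto
  moreover have "Gq q x > 0"
    using Gq_pos[OF q] .
  ultimately show "\<exists>d. (wfun q has_real_derivative d) (at x) \<and> d > 0"
    using wfun_has_real_derivative[OF \<open>x > 0\<close>]
    by (intro exI[of _ "wfun_deriv_numer q x / (Gq q x)\<^sup>2"] conjI) simp_all
qed (use assms(1) in \<open>auto intro: continuous_on_subset[OF wfun_continuous_on]\<close>)

lemma wfun_max_unique: "\<exists>!A. A \<in> {0..Dstar q} \<and> (\<forall>B\<in>{0..Dstar q}. wfun q B \<le> wfun q A)"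
proof (rule ex_ex1I)
  show "\<exists>A. A \<in> {0..Dstar q} \<and> (\<forall>B\<in>{0..Dstar q}. wfun q B \<le> wfun q A)"
    using continuous_attains_sup[of "{0..Dstar q}" "wfun q"] Dstar(1)[OF q]
      continuous_on_subset[OF wfun_continuous_on, of "{0..Dstar q}"] by auto
next
  have no_two_max: False
    if "0 \<le> B1" "B1 < B2" "B2 \<le> Dstar q"
      and "\<forall>B\<in>{0..Dstar q}. wfun q B \<le> wfun q B1" and "\<forall>B\<in>{0..Dstar q}. wfun q B \<le> wfun q B2"
    for B1 B2
  proof -
    have "wfun q B1 = wfun q B2"
      using that by (auto intro: order.antisym)
    moreover have "wfun q differentiable (at x)" if "B1 < x" for x
      using wfun_has_real_derivative[of x] that \<open>0 \<le> B1\<close> by (auto simp: real_differentiable_def)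
    ultimately obtain z where z: "B1 < z" "z < B2" "(wfun q has_real_derivative 0) (at z)"
      using MVT[OF \<open>B1 < B2\<close> continuous_on_subset[OF wfun_continuous_on]] \<open>0 \<le> B1\<close> by fastforce
    then have "wfun_deriv_numer q z = 0"
      using DERIV_unique[OF z(3) wfun_has_real_derivative] \<open>0 \<le> B1\<close> Gq_pos[OF q, of z] by simp
    then have "wfun q B1 < wfun q z"
      using wfun_less_at_root[of B1 z] that z by simp
    moreover have "z \<in> {0..Dstar q}"
      using that z by simp
    ultimately show False
      using that(4) by fastforce
  qed
  show "A = B" if "A \<in> {0..Dstar q} \<and> (\<forall>B\<in>{0..Dstar q}. wfun q B \<le> wfun q A)"
    and "B \<in> {0..Dstar q} \<and> (\<forall>C\<in>{0..Dstar q}. wfun q C \<le> wfun q B)" for A B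
  proof (rule ccontr)
    assume "A \<noteq> B"
    then consider "A < B" | "B < A"
      by linarith
    then show False
      using no_two_max[of A B] no_two_max[of B A] that by cases simp_all
  qed
qed

lemma Astar: "0 \<le> Astar q" "Astar q < Dstar q" "\<And>B. B \<in> {0..Dstar q} \<Longrightarrow> wfun q B \<le> wfun q (Astar q)"
proof -
  have max: "Astar q \<in> {0..Dstar q}" "\<forall>B\<in>{0..Dstar q}. wfun q B \<le> wfun q (Astar q)"
    using theI'[OF wfun_max_unique] unfolding Astar_def[symmetric] by auto
  then show "0 \<le> Astar q" "\<And>B. B \<in> {0..Dstar q} \<Longrightarrow> wfun q B \<le> wfun q (Astar q)"
    by auto
  have "wfun q 0 \<le> wfun q (Astar q)"
    using max(2) Dstar(1)[OF q] by auto
  then have "Astar q \<noteq> Dstar q"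
    using wfun_0_pos wfun_Dstar by auto
  then show "Astar q < Dstar q"
    using max(1) by auto
qed

lemma wfun_numer'_Astar:
  assumes A: "Astar q > 0"
  shows "wfun_numer' q (Astar q) = - wfun q (Astar q) * Gq (q + 1) (Astar q)"
proof -
  have "wfun_deriv_numer q (Astar q) / (Gq q (Astar q))\<^sup>2 = 0"
  proof (rule DERIV_local_max[OF wfun_has_real_derivative[OF A]])
    show "0 < min (Astar q) (Dstar q - Astar q)"
      using A Astar(2) by simp
    show "\<forall>y. \<bar>Astar q - y\<bar> < min (Astar q) (Dstar q - Astar q) \<longrightarrow> wfun q y \<le> wfun q (Astar q)"
      by (auto intro: Astar(3) simp: abs_less_iff)
  qed
  then show ?thesis
    using Gq_pos[OF q, of "Astar q"]
    by (simp add: wfun_deriv_numer_def wfun_eq field_simps)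
qed

end

section \<open>One-sided derivatives of \<open>W\<^sup>*\<close> and \<open>h\<close>\<close>

context
  fixes q t :: real
  assumes q: "q > 0" and t: "0 \<le> t" "t < 1"
begin

abbreviation (input) s :: real where "s \<equiv> sqrt (1 - t)"

lemma s_pos: "s > 0"
  using t by simp

lemma Wstar_even: "Wstar q t (- x) = Wstar q t x"
  by (simp add: Wstar_def hfun_def Ubar_def Gq_def)

lemma hfun_even: "hfun q t (- x) = hfun q t x"
  by (simp add: hfun_def Ubar_def Gq_def)

lemma Wstar_eq_rescaled:
  assumes "Astar q * s < x"
  shows "Wstar q t x = s powr q * (wfun q (Astar q) * Gq q (x / s))"
proof -
  have "(1 - t) powr (q / 2) = s powr q"
    using t by (simp add: powr_half_sqrt[symmetric] powr_powr)
  moreover have "x > 0"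
    using mult_nonneg_nonneg[OF Astar(1)[OF q] less_imp_le[OF s_pos]] assms by linarith
  ultimately show ?thesis
    using assms by (simp add: Wstar_def)
qed

lemma hfun_eq_rescaled:
  assumes "0 < x" "x < Dstar q * s"
  shows "hfun q t x = s powr q * wfun_numer q (x / s)"
proof -
  have "hfun q t x = (1 - t) powr (q / 2) * Dstar q powr q * Hq q (x / s) / Hq q (Dstar q) - x powr q"
    using assms by (simp add: hfun_def Ubar_def Hq_def)
  also have "(1 - t) powr (q / 2) = s powr q"
    using t by (simp add: powr_half_sqrt[symmetric] powr_powr)
  also have "x powr q = s powr q * (x / s) powr q"
    using assms(1) s_pos by (simp add: powr_divide)
  finally show ?thesis
    unfolding wfun_numer_def Cstar_def by (simp add: right_diff_distrib)
qed

lemma Wstar_has_real_derivative: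
  assumes "Astar q * s < x"
  shows "(Wstar q t has_real_derivative s powr (q - 1) * (wfun q (Astar q) * - Gq (q + 1) (x / s))) (at x)"
proof (rule has_field_derivative_transform_within_open[where S = "{Astar q * s<..}"])
  show "((\<lambda>x. s powr q * (wfun q (Astar q) * Gq q (x / s))) has_real_derivative
      s powr (q - 1) * (wfun q (Astar q) * - Gq (q + 1) (x / s))) (at x)"
    using s_pos by (intro has_real_derivative_powr_rescaled DERIV_cmult Gq_has_real_derivative q)
qed (use assms Wstar_eq_rescaled in auto)

lemma hfun_has_real_derivative:
  assumes "0 < x" "x < Dstar q * s"
  shows "(hfun q t has_real_derivative s powr (q - 1) * wfun_numer' q (x / s)) (at x)"
proof (rule has_field_derivative_transform_within_open[where S = "{0<..<Dstar q * s}"])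
  show "((\<lambda>x. s powr q * wfun_numer q (x / s)) has_real_derivative s powr (q - 1) * wfun_numer' q (x / s)) (at x)"
    using s_pos divide_pos_pos[OF assms(1) s_pos]
    by (intro has_real_derivative_powr_rescaled wfun_numer_has_real_derivative q)
qed (use assms hfun_eq_rescaled in auto)

lemma tendsto_deriv_Wstar:
  defines "L \<equiv> s powr (q - 1) * (wfun q (Astar q) * - Gq (q + 1) (Astar q))"
  shows "(deriv (Wstar q t) \<longlongrightarrow> L) (at_right (Astar q * s))"
    and "(deriv (Wstar q t) \<longlongrightarrow> - L) (at_left (- Astar q * s))"
proof -
  define g where "g x = s powr (q - 1) * (wfun q (Astar q) * - Gq (q + 1) (x / s))" for x
  have derivative: "(Wstar q t has_real_derivative g x) (at x)" if "Astar q * s < x" "x < Astar q * s + 1" for x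
    unfolding g_def using Wstar_has_real_derivative[OF that(1)] .
  have "isCont g (Astar q * s)"
    unfolding g_def using q t
    by (intro continuous_intros continuous_at_compose[OF _ DERIV_isCont[OF Gq_has_real_derivative], unfolded o_def])
      auto
  moreover have "g (Astar q * s) = L"
    unfolding g_def L_def using s_pos by simp
  ultimately show "(deriv (Wstar q t) \<longlongrightarrow> L) (at_right (Astar q * s))"
    and "(deriv (Wstar q t) \<longlongrightarrow> - L) (at_left (- Astar q * s))"
    using tendsto_deriv_at_right[where a = "Astar q * s" and b = "Astar q * s + 1" and g = g,
        OF _ derivative]
      tendsto_deriv_at_left_uminus_of_even[where a = "Astar q * s" and b = "Astar q * s + 1" and g = g,
        OF Wstar_even _ derivative]
    by simp_all
qed

lemma tendsto_deriv_hfun: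
  assumes A: "Astar q > 0"
  defines "M \<equiv> s powr (q - 1) * wfun_numer' q (Astar q)"
  shows "(deriv (hfun q t) \<longlongrightarrow> M) (at_left (Astar q * s))"
    and "(deriv (hfun q t) \<longlongrightarrow> - M) (at_right (- Astar q * s))"
proof -
  define g where "g x = s powr (q - 1) * wfun_numer' q (x / s)" for x
  have "Astar q * s < Dstar q * s"
    using Astar(2)[OF q] s_pos by simp
  then have derivative: "(hfun q t has_real_derivative g x) (at x)" if "0 < x" "x < Astar q * s" for x
    unfolding g_def using hfun_has_real_derivative[OF that(1)] that(2) by simp
  have "isCont g (Astar q * s)"
    unfolding g_def using s_pos A
    by (intro continuous_intros continuous_at_compose[OF _ DERIV_isCont[OF wfun_numer'_has_real_derivative[OF q]],
        unfolded o_def]) auto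
  moreover have "g (Astar q * s) = M"
    unfolding g_def M_def using s_pos by simp
  moreover have "0 < Astar q * s"
    using A s_pos by simp
  ultimately show "(deriv (hfun q t) \<longlongrightarrow> M) (at_left (Astar q * s))"
    and "(deriv (hfun q t) \<longlongrightarrow> - M) (at_right (- Astar q * s))"
    using tendsto_deriv_at_left[where a = 0 and b = "Astar q * s" and g = g, OF _ derivative]
      tendsto_deriv_at_right_uminus_of_even[where a = 0 and b = "Astar q * s" and g = g,
        OF hfun_even _ derivative]
    by simp_all
qed

end

theorem lemma5p4:
  fixes q t :: real
  assumes "q > 0" and "0 \<le> t" and "t < 1"
  shows "(Astar q > 0 \<longrightarrow>
            (\<exists>L. (deriv (Wstar q t) \<longlongrightarrow> L) (at_right (Astar q * sqrt (1 - t)))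
                 \<and> (deriv (hfun q t) \<longlongrightarrow> L) (at_left (Astar q * sqrt (1 - t))))
          \<and> (\<exists>L. (deriv (Wstar q t) \<longlongrightarrow> L) (at_left (- Astar q * sqrt (1 - t)))
                 \<and> (deriv (hfun q t) \<longlongrightarrow> L) (at_right (- Astar q * sqrt (1 - t)))))
       \<and> (Astar q = 0 \<longrightarrow>
            (\<exists>L1 L2. (deriv (Wstar q t) \<longlongrightarrow> L1) (at_right 0)
                    \<and> (deriv (Wstar q t) \<longlongrightarrow> L2) (at_left 0) \<and> L1 < L2))"
proof -
  define L where "L = sqrt (1 - t) powr (q - 1) * (wfun q (Astar q) * - Gq (q + 1) (Astar q))"
  note W = tendsto_deriv_Wstar[OF assms, folded L_def]
  have smooth_fit: "sqrt (1 - t) powr (q - 1) * wfun_numer' q (Astar q) = L" if "Astar q > 0"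
    unfolding L_def using wfun_numer'_Astar[OF assms(1) that] by simp
  have kink: "L < 0" if "Astar q = 0"
    unfolding L_def using that wfun_0_pos[OF assms(1)] Gq_pos[of "q + 1" 0] assms by (simp add: mult_pos_pos)
  show ?thesis
  proof (intro conjI impI)
    assume A: "Astar q > 0"
    note h = tendsto_deriv_hfun[OF assms A, unfolded smooth_fit[OF A]]
    show "\<exists>L. (deriv (Wstar q t) \<longlongrightarrow> L) (at_right (Astar q * sqrt (1 - t)))
        \<and> (deriv (hfun q t) \<longlongrightarrow> L) (at_left (Astar q * sqrt (1 - t)))"
      using W(1) h(1) by blast
    show "\<exists>L. (deriv (Wstar q t) \<longlongrightarrow> L) (at_left (- Astar q * sqrt (1 - t)))
        \<and> (deriv (hfun q t) \<longlongrightarrow> L) (at_right (- Astar q * sqrt (1 - t)))"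
      using W(2) h(2) by blast
  next
    assume A: "Astar q = 0"
    show "\<exists>L1 L2. (deriv (Wstar q t) \<longlongrightarrow> L1) (at_right 0)
        \<and> (deriv (Wstar q t) \<longlongrightarrow> L2) (at_left 0) \<and> L1 < L2"
      using W kink[OF A] A by (intro exI[of _ L] exI[of _ "- L"]) simp
  qed
qed

end
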